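(* For the FCIQMC step, on the event $M_t\ge m$, $$\mathbb{E}\bigl(\|F(A,v_t)-Av_t\|_2^2\mid\mathcal{F}_t\bigr)\le C_e\frac{\|A\|_1^2\|v_t\|_1^2}{m},\qquad C_e=\frac{\max_k(\|a_k\|_0-2)\|a_{o,k}\|_2^2+\frac12}{\|A\|_1^2}.$$
   Context: Let $A\in\mathbb{R}^{N\times N}$ be real symmetric, with every diagonal entry nonzero and every column having at least 2 nonzero entries. Write $A=A_d+A_o$ with $A_d$ the diagonal part and $A_o$ the off-diagonal part; $a_k=A(:,k)$, $a_{o,k}=A_o(:,k)$; $\|x\|_0$ is the number of nonzero entries; $\|A\|_1=\max_k\sum_i|A_{ik}|$; $e_l$ the $l$-th standard basis vector. FCIQMC step: the current iterate $v_t\in\mathbb{Z}^N$ is represented by $M_t=\|v_t\|_1$ signed particles, $|v_t(k)|$ particles at location $k$ each with sign $\mathrm{sgn}(v_t(k))$. For each particle with location $k$ and sign $s$, independently of all other particles (conditionally on $\mathcal F_t$): (Spawning) choose $l$ uniformly at random among the indices $j$ with $A_o(j,k)\neq0$; let $Q=\|a_{o,k}\|_0|A(l,k)|$ and $n=\lfloor Q\rfloor$ w.p. $1-(Q-\lfloor Q\rfloor)$, $n=\lfloor Q\rfloor+1$ w.p. $Q-\lfloor Q\rfloor$; contribute $n\,\mathrm{sgn}(A(l,k)s)\,e_l$. (Diagonal) independently, $Q=|A(k,k)|$, $n$ by the same rounding rule, contribute $n\,\mathrm{sgn}(A(k,k)s)\,e_k$. (Annihilation) $F(A,v_t)=v_{t+1}$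 is the sum of all contributions. $\mathcal{F}_t=\sigma(v_1,\dots,v_t)$. *)

theory Defs
  imports "HOL-Probability.Probability"
begin

text \<open>Matrices are N x N real matrices given as functions nat => nat => real, indexed by
  {0..<N}; A i k is the entry in row i, column k. Integer vectors are nat => int, only
  the entries with index < N are relevant (all random contributions vanish outside).\<close>

definition rsgn :: "real \<Rightarrow> int" where
  "rsgn x = (if x > 0 then 1 else if x < 0 then -1 else 0)"

definition sround :: "real \<Rightarrow> int pmf" where
  "sround Q = map_pmf (\<lambda>b. if b then \<lfloor>Q\<rfloor> + 1 else \<lfloor>Q\<rfloor>) (bernoulli_pmf (Q - of_int \<lfloor>Q\<rfloor>))"

definition offsupp :: "nat \<Rightarrow> (nat \<Rightarrow> nat \<Rightarrow> real) \<Rightarrow> nat \<Rightarrow> nat set" where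
  "offsupp N A k = {j. j < N \<and> j \<noteq> k \<and> A j k \<noteq> 0}"

definition spawn_pmf :: "nat \<Rightarrow> (nat \<Rightarrow> nat \<Rightarrow> real) \<Rightarrow> nat \<Rightarrow> int \<Rightarrow> (nat \<Rightarrow> int) pmf" where
  "spawn_pmf N A k s =
     pmf_of_set (offsupp N A k) \<bind> (\<lambda>l.
     sround (real (card (offsupp N A k)) * \<bar>A l k\<bar>) \<bind> (\<lambda>n.
     return_pmf (\<lambda>i. if i = l then n * rsgn (A l k * real_of_int s) else 0)))"

definition diag_pmf :: "(nat \<Rightarrow> nat \<Rightarrow> real) \<Rightarrow> nat \<Rightarrow> int \<Rightarrow> (nat \<Rightarrow> int) pmf" where
  "diag_pmf A k s =
     sround \<bar>A k k\<bar> \<bind> (\<lambda>n.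
     return_pmf (\<lambda>i. if i = k then n * rsgn (A k k * real_of_int s) else 0))"

definition particle_pmf :: "nat \<Rightarrow> (nat \<Rightarrow> nat \<Rightarrow> real) \<Rightarrow> nat \<times> int \<Rightarrow> (nat \<Rightarrow> int) pmf" where
  "particle_pmf N A p =
     spawn_pmf N A (fst p) (snd p) \<bind> (\<lambda>x. diag_pmf A (fst p) (snd p) \<bind> (\<lambda>y.
     return_pmf (\<lambda>i. x i + y i)))"

fun sum_particles :: "nat \<Rightarrow> (nat \<Rightarrow> nat \<Rightarrow> real) \<Rightarrow> (nat \<times> int) list \<Rightarrow> (nat \<Rightarrow> int) pmf" where
  "sum_particles N A [] = return_pmf (\<lambda>i. 0)"
| "sum_particles N A (p # ps) =
     particle_pmf N A p \<bind> (\<lambda>x. sum_particles N A ps \<bind> (\<lambda>y. return_pmf (\<lambda>i. x i + y i)))"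

definition particles :: "nat \<Rightarrow> (nat \<Rightarrow> int) \<Rightarrow> (nat \<times> int) list" where
  "particles N v = concat (map (\<lambda>k. replicate (nat \<bar>v k\<bar>) (k, sgn (v k))) [0..<N])"

text \<open>Distribution of F(A,v): the FCIQMC step with annihilation (conditional law given F_t).\<close>
definition fciqmc_step :: "nat \<Rightarrow> (nat \<Rightarrow> nat \<Rightarrow> real) \<Rightarrow> (nat \<Rightarrow> int) \<Rightarrow> (nat \<Rightarrow> int) pmf" where
  "fciqmc_step N A v = sum_particles N A (particles N v)"

definition mat_norm1 :: "nat \<Rightarrow> (nat \<Rightarrow> nat \<Rightarrow> real) \<Rightarrow> real" where
  "mat_norm1 N A = Max ((\<lambda>k. \<Sum>i<N. \<bar>A i k\<bar>) ` {..<N})"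

definition vec_norm1 :: "nat \<Rightarrow> (nat \<Rightarrow> int) \<Rightarrow> real" where
  "vec_norm1 N v = (\<Sum>i<N. real_of_int \<bar>v i\<bar>)"

definition col_norm0 :: "nat \<Rightarrow> (nat \<Rightarrow> nat \<Rightarrow> real) \<Rightarrow> nat \<Rightarrow> nat" where
  "col_norm0 N A k = card {i. i < N \<and> A i k \<noteq> 0}"

definition offcol_norm2_sq :: "nat \<Rightarrow> (nat \<Rightarrow> nat \<Rightarrow> real) \<Rightarrow> nat \<Rightarrow> real" where
  "offcol_norm2_sq N A k = (\<Sum>i\<in>{i. i < N \<and> i \<noteq> k}. (A i k)\<^sup>2)"

definition C_e :: "nat \<Rightarrow> (nat \<Rightarrow> nat \<Rightarrow> real) \<Rightarrow> real" where
  "C_e N A = (Max ((\<lambda>k. (real (col_norm0 N A k) - 2) * offcol_norm2_sq N A k) ` {..<N}) + 1/2)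
              / (mat_norm1 N A)\<^sup>2"

definition mat_vec :: "nat \<Rightarrow> (nat \<Rightarrow> nat \<Rightarrow> real) \<Rightarrow> (nat \<Rightarrow> int) \<Rightarrow> nat \<Rightarrow> real" where
  "mat_vec N A v i = (\<Sum>j<N. A i j * real_of_int (v j))"

end

theory Submission
  imports Defs
begin

(* Given F_t the particles act independently, so the mean-square error of F(A,v) about its mean
   Av is the sum of the variances of the single-particle contributions; a particle at k with sign s
   contributes s a_k on average. Stochastic rounding of Q has mean Q and second moment at most
   Q^2 + 1/4. Hence the diagonal step has variance at most 1/4, and the spawning step, a uniform
   mixture over the c = ||a_{o,k}||_0 off-diagonal positions l of the rounded value c |A(l,k)|,
   has variance at most (c - 1) ||a_{o,k}||_2^2 + 1/4. Summing over the M = ||v||_1 particles gives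
   M (max_k (||a_k||_0 - 2) ||a_{o,k}||_2^2 + 1/2), which is at most C_e ||A||_1^2 M^2 / m when M >= m. *)

abbreviation E :: "'a pmf \<Rightarrow> ('a \<Rightarrow> real) \<Rightarrow> real" where
  "E P f \<equiv> measure_pmf.expectation P f"

lemma expectation_bind_pmf_finite:
  assumes "finite (set_pmf P)" "\<And>x. x \<in> set_pmf P \<Longrightarrow> finite (set_pmf (K x))"
  shows "E (P \<bind> K) f = E P (\<lambda>x. E (K x) f)"
  using assms
  by (simp add: pmf_expectation_bind[OF assms order_refl] integral_measure_pmf_real mult.commute)

lemma expectation_add_finite: "finite (set_pmf P) \<Longrightarrow> E P (\<lambda>x. f x + g x) = E P f + E P g"
  by (rule Bochner_Integration.integral_add) (auto intro: integrable_measure_pmf_finite)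

lemma expectation_diff_finite: "finite (set_pmf P) \<Longrightarrow> E P (\<lambda>x. f x - g x) = E P f - E P g"
  by (rule Bochner_Integration.integral_diff) (auto intro: integrable_measure_pmf_finite)

lemma expectation_sum_finite:
  "finite (set_pmf P) \<Longrightarrow> E P (\<lambda>x. \<Sum>i\<in>I. f i x) = (\<Sum>i\<in>I. E P (f i))"
  by (rule Bochner_Integration.integral_sum) (auto intro: integrable_measure_pmf_finite)

lemma finite_set_sround [simp]: "finite (set_pmf (sround Q))"
  by (simp add: sround_def)

lemma expectation_sround:
  "E (sround Q) g = g (\<lfloor>Q\<rfloor> + 1) * frac Q + g \<lfloor>Q\<rfloor> * (1 - frac Q)"
  using frac_ge_0[of Q] frac_lt_1[of Q] by (simp add: sround_def frac_def)

lemma expectation_sround_of_int: "E (sround Q) real_of_int = Q"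
  unfolding expectation_sround by (simp add: frac_def algebra_simps)

lemma expectation_sround_square_le: "E (sround Q) (\<lambda>n. (real_of_int n)\<^sup>2) \<le> Q\<^sup>2 + 1/4"
proof -
  have "E (sround Q) (\<lambda>n. (real_of_int n)\<^sup>2) = (of_int \<lfloor>Q\<rfloor> + frac Q)\<^sup>2 + (frac Q - (frac Q)\<^sup>2)"
    unfolding expectation_sround by (simp add: power2_eq_square algebra_simps)
  also have "of_int \<lfloor>Q\<rfloor> + frac Q = Q" by (simp add: frac_def)
  also have "frac Q - (frac Q)\<^sup>2 \<le> 1/4"
    using zero_le_power2[of "frac Q - 1/2"] by (simp add: power2_eq_square algebra_simps)
  finally show ?thesis by simp
qed

definition indep_sum_pmf :: "(nat \<Rightarrow> int) pmf \<Rightarrow> (nat \<Rightarrow> int) pmf \<Rightarrow> (nat \<Rightarrow> int) pmf" where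
  "indep_sum_pmf P Q = P \<bind> (\<lambda>x. Q \<bind> (\<lambda>y. return_pmf (\<lambda>i. x i + y i)))"

definition mean_vec :: "(nat \<Rightarrow> int) pmf \<Rightarrow> nat \<Rightarrow> real" where
  "mean_vec P i = E P (\<lambda>w. real_of_int (w i))"

definition sq_dev :: "nat \<Rightarrow> (nat \<Rightarrow> int) pmf \<Rightarrow> (nat \<Rightarrow> real) \<Rightarrow> real" where
  "sq_dev N P c = E P (\<lambda>w. \<Sum>i<N. (real_of_int (w i) - c i)\<^sup>2)"

lemma mean_vec_return_pmf [simp]: "mean_vec (return_pmf x) = (\<lambda>i. of_int (x i))"
  by (simp add: fun_eq_iff mean_vec_def)

lemma sq_dev_cong: "(\<And>i. i < N \<Longrightarrow> c i = c' i) \<Longrightarrow> sq_dev N P c = sq_dev N P c'"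
  unfolding sq_dev_def by simp

lemma finite_set_indep_sum_pmf:
  "finite (set_pmf P) \<Longrightarrow> finite (set_pmf Q) \<Longrightarrow> finite (set_pmf (indep_sum_pmf P Q))"
  by (simp add: indep_sum_pmf_def set_bind_pmf)

lemma expectation_indep_sum_pmf:
  assumes "finite (set_pmf P)" "finite (set_pmf Q)"
  shows "E (indep_sum_pmf P Q) f = E P (\<lambda>x. E Q (\<lambda>y. f (\<lambda>i. x i + y i)))"
  using assms unfolding indep_sum_pmf_def
  by (simp add: expectation_bind_pmf_finite set_bind_pmf)

lemma mean_vec_indep_sum_pmf:
  assumes "finite (set_pmf P)" "finite (set_pmf Q)"
  shows "mean_vec (indep_sum_pmf P Q) = (\<lambda>i. mean_vec P i + mean_vec Q i)"
  using assms by (simp add: fun_eq_iff mean_vec_def expectation_indep_sum_pmf expectation_add_finite)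

text \<open>Independence kills the cross terms: the deviation of Q from its mean has zero mean.\<close>
lemma sq_dev_indep_sum_pmf:
  assumes fP: "finite (set_pmf P)" and fQ: "finite (set_pmf Q)"
  shows "sq_dev N (indep_sum_pmf P Q) (\<lambda>i. c i + mean_vec Q i) = sq_dev N P c + sq_dev N Q (mean_vec Q)"
proof -
  have cross_free: "E Q (\<lambda>y. \<Sum>i<N. (real_of_int (x i + y i) - (c i + mean_vec Q i))\<^sup>2)
     = (\<Sum>i<N. (real_of_int (x i) - c i)\<^sup>2) + sq_dev N Q (mean_vec Q)" for x :: "nat \<Rightarrow> int"
  proof -
    have "(real_of_int (x i + y i) - (c i + mean_vec Q i))\<^sup>2 =
       (real_of_int (x i) - c i)\<^sup>2 + (real_of_int (y i) - mean_vec Q i)\<^sup>2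
        + 2 * (real_of_int (x i) - c i) * (real_of_int (y i) - mean_vec Q i)" for y i
      by (simp add: power2_eq_square algebra_simps)
    moreover have "E Q (\<lambda>y. real_of_int (y i) - mean_vec Q i) = 0" for i
      using fQ by (simp add: expectation_diff_finite mean_vec_def)
    ultimately show ?thesis
      using fQ by (simp add: sum.distrib expectation_add_finite expectation_sum_finite sq_dev_def)
  qed
  show ?thesis
    using fP fQ by (simp add: sq_dev_def expectation_indep_sum_pmf cross_free expectation_add_finite del: of_int_add)
qed

definition rounded_unit_pmf :: "real \<Rightarrow> nat \<Rightarrow> int \<Rightarrow> (nat \<Rightarrow> int) pmf" where
  "rounded_unit_pmf Q l \<sigma> = sround Q \<bind> (\<lambda>n. return_pmf (\<lambda>i. if i = l then n * \<sigma> else 0))"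

lemma finite_set_rounded_unit_pmf [simp]: "finite (set_pmf (rounded_unit_pmf Q l \<sigma>))"
  by (simp add: rounded_unit_pmf_def set_bind_pmf)

lemma expectation_rounded_unit_pmf:
  "E (rounded_unit_pmf Q l \<sigma>) f = E (sround Q) (\<lambda>n. f (\<lambda>i. if i = l then n * \<sigma> else 0))"
  by (simp add: rounded_unit_pmf_def expectation_bind_pmf_finite)

lemma mean_vec_rounded_unit_pmf:
  "mean_vec (rounded_unit_pmf Q l \<sigma>) i = (if i = l then of_int \<sigma> * Q else 0)"
  by (simp add: mean_vec_def expectation_rounded_unit_pmf expectation_sround_of_int mult.commute)

lemma sq_dev_rounded_unit_pmf_le:
  assumes "l < N" "(real_of_int \<sigma>)\<^sup>2 = 1"
  shows "sq_dev N (rounded_unit_pmf Q l \<sigma>) \<mu> \<le> Q\<^sup>2 + 1/4 - 2 * (of_int \<sigma> * \<mu> l) * Q + (\<Sum>i<N. (\<mu> i)\<^sup>2)"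
proof -
  have "(\<Sum>i<N. (real_of_int (if i = l then n * \<sigma> else 0) - \<mu> i)\<^sup>2)
      = (real_of_int n)\<^sup>2 - 2 * of_int \<sigma> * \<mu> l * real_of_int n + (\<Sum>i<N. (\<mu> i)\<^sup>2)" for n
  proof -
    have "(real_of_int (if i = l then n * \<sigma> else 0) - \<mu> i)\<^sup>2
        = (if i = l then (real_of_int n)\<^sup>2 - 2 * of_int \<sigma> * \<mu> l * real_of_int n else 0) + (\<mu> i)\<^sup>2" for i
      using assms(2) by (simp add: power2_eq_square algebra_simps)
    then show ?thesis using assms(1) by (simp add: sum.distrib)
  qed
  then have "sq_dev N (rounded_unit_pmf Q l \<sigma>) \<mu>
      = E (sround Q) (\<lambda>n. (real_of_int n)\<^sup>2) - 2 * of_int \<sigma> * \<mu> l * Q + (\<Sum>i<N. (\<mu> i)\<^sup>2)"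
    by (simp add: sq_dev_def expectation_rounded_unit_pmf expectation_add_finite
        expectation_diff_finite expectation_sround_of_int)
  with expectation_sround_square_le[of Q] show ?thesis by linarith
qed

lemma sq_dev_rounded_unit_pmf_mean_le:
  assumes "l < N" "(real_of_int \<sigma>)\<^sup>2 = 1"
  shows "sq_dev N (rounded_unit_pmf Q l \<sigma>) (mean_vec (rounded_unit_pmf Q l \<sigma>)) \<le> 1/4"
proof -
  let ?\<mu> = "mean_vec (rounded_unit_pmf Q l \<sigma>)"
  have "(?\<mu> i)\<^sup>2 = (if i = l then Q\<^sup>2 else 0)" for i
    using assms(2) by (simp add: mean_vec_rounded_unit_pmf power_mult_distrib)
  then have "(\<Sum>i<N. (?\<mu> i)\<^sup>2) = Q\<^sup>2" using assms(1) by simp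
  moreover have "of_int \<sigma> * ?\<mu> l = Q"
    using assms(2) by (simp add: mean_vec_rounded_unit_pmf power2_eq_square)
  ultimately show ?thesis
    using sq_dev_rounded_unit_pmf_le[OF assms, of Q ?\<mu>] by (simp add: power2_eq_square)
qed

lemma of_int_rsgn_mult_sign: "s \<in> {1, -1} \<Longrightarrow> real_of_int (rsgn (a * of_int s)) = sgn a * of_int s"
  by (auto simp: rsgn_def sgn_if)

lemma finite_offsupp [simp]: "finite (offsupp N A k)"
  by (rule finite_subset[of _ "{..<N}"]) (auto simp: offsupp_def)

lemma offsupp_nonempty:
  assumes "card {i. i < N \<and> A i k \<noteq> 0} \<ge> 2"
  shows "offsupp N A k \<noteq> {}"
proof
  assume "offsupp N A k = {}"
  then have "{i. i < N \<and> A i k \<noteq> 0} \<subseteq> {k}" by (auto simp: offsupp_def)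
  then have "card {i. i < N \<and> A i k \<noteq> 0} \<le> 1" using card_mono[of "{k}"] by fastforce
  with assms show False by simp
qed

lemma col_norm0_eq_card_offsupp:
  assumes "k < N" "A k k \<noteq> 0"
  shows "col_norm0 N A k = card (offsupp N A k) + 1"
proof -
  have "{i. i < N \<and> A i k \<noteq> 0} = insert k (offsupp N A k)"
    using assms by (auto simp: offsupp_def)
  then show ?thesis by (simp add: col_norm0_def offsupp_def)
qed

lemma offcol_norm2_sq_eq: "offcol_norm2_sq N A k = (\<Sum>l\<in>offsupp N A k. (A l k)\<^sup>2)"
  unfolding offcol_norm2_sq_def by (rule sum.mono_neutral_right) (auto simp: offsupp_def)

lemma spawn_pmf_eq_mixture:
  "spawn_pmf N A k s = pmf_of_set (offsupp N A k) \<bind>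
     (\<lambda>l. rounded_unit_pmf (real (card (offsupp N A k)) * \<bar>A l k\<bar>) l (rsgn (A l k * of_int s)))"
  unfolding spawn_pmf_def rounded_unit_pmf_def ..

lemma expectation_spawn_pmf:
  assumes "offsupp N A k \<noteq> {}"
  shows "E (spawn_pmf N A k s) f = (\<Sum>l\<in>offsupp N A k.
     E (rounded_unit_pmf (real (card (offsupp N A k)) * \<bar>A l k\<bar>) l (rsgn (A l k * of_int s))) f)
       / real (card (offsupp N A k))"
  using assms unfolding spawn_pmf_eq_mixture
  by (simp add: expectation_bind_pmf_finite integral_pmf_of_set)

lemma finite_set_spawn_pmf: "offsupp N A k \<noteq> {} \<Longrightarrow> finite (set_pmf (spawn_pmf N A k s))"
  by (simp add: spawn_pmf_eq_mixture set_bind_pmf)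

lemma mean_vec_spawn_pmf:
  assumes S: "offsupp N A k \<noteq> {}" and s: "s \<in> {1, -1}"
  shows "mean_vec (spawn_pmf N A k s) i = (if i \<in> offsupp N A k then of_int s * A i k else 0)"
proof -
  have "card (offsupp N A k) > 0" using S by (simp add: card_gt_0_iff)
  then show ?thesis
    using S unfolding mean_vec_def expectation_spawn_pmf[OF S]
    by (simp add: mean_vec_def[symmetric] mean_vec_rounded_unit_pmf of_int_rsgn_mult_sign[OF s]
        sum.delta' sgn_mult_abs)
qed

lemma sq_dev_spawn_pmf_le:
  assumes S: "offsupp N A k \<noteq> {}" and s: "s \<in> {1, -1}"
  shows "sq_dev N (spawn_pmf N A k s) (mean_vec (spawn_pmf N A k s))
     \<le> (real (card (offsupp N A k)) - 1) * (\<Sum>l\<in>offsupp N A k. (A l k)\<^sup>2) + 1/4"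
proof -
  define S where "S = offsupp N A k"
  define c where "c = real (card S)"
  define W where "W = (\<Sum>l\<in>S. (A l k)\<^sup>2)"
  define \<mu> where "\<mu> = mean_vec (spawn_pmf N A k s)"
  have c: "c > 0" using S by (simp add: S_def c_def card_gt_0_iff)
  have s2: "(real_of_int s)\<^sup>2 = 1" using s by auto
  have \<mu>: "\<mu> i = (if i \<in> S then of_int s * A i k else 0)" for i
    unfolding \<mu>_def S_def by (rule mean_vec_spawn_pmf[OF S s])
  have "(\<mu> i)\<^sup>2 = (if i \<in> S then (A i k)\<^sup>2 else 0)" for i
    by (simp add: \<mu> power_mult_distrib s2)
  then have "(\<Sum>i<N. (\<mu> i)\<^sup>2) = (\<Sum>i\<in>{..<N} \<inter> S. (A i k)\<^sup>2)"
    by (simp add: sum.inter_restrict)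
  also have "{..<N} \<inter> S = S" by (auto simp: S_def offsupp_def)
  finally have \<mu>_norm: "(\<Sum>i<N. (\<mu> i)\<^sup>2) = W" by (simp add: W_def)
  have branch: "sq_dev N (rounded_unit_pmf (c * \<bar>A l k\<bar>) l (rsgn (A l k * of_int s))) \<mu>
      \<le> (c * c - 2 * c) * (A l k)\<^sup>2 + (1/4 + W)" if l: "l \<in> S" for l
  proof -
    have lN: "l < N" and Alk: "A l k \<noteq> 0" using l by (auto simp: S_def offsupp_def)
    have \<sigma>: "real_of_int (rsgn (A l k * of_int s)) = sgn (A l k) * of_int s"
      by (rule of_int_rsgn_mult_sign[OF s])
    have "(real_of_int (rsgn (A l k * of_int s)))\<^sup>2 = 1"
      using Alk s2 by (simp add: \<sigma> power_mult_distrib sgn_if)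
    from sq_dev_rounded_unit_pmf_le[OF lN this]
    have "sq_dev N (rounded_unit_pmf (c * \<bar>A l k\<bar>) l (rsgn (A l k * of_int s))) \<mu>
      \<le> (c * \<bar>A l k\<bar>)\<^sup>2 + 1/4 - 2 * (real_of_int (rsgn (A l k * of_int s)) * \<mu> l) * (c * \<bar>A l k\<bar>)
         + (\<Sum>i<N. (\<mu> i)\<^sup>2)" .
    also have "real_of_int (rsgn (A l k * of_int s)) * \<mu> l = \<bar>A l k\<bar>"
      using l s by (auto simp: \<sigma> \<mu> sgn_if)
    also note \<mu>_norm
    finally show ?thesis by (simp add: power2_eq_square algebra_simps)
  qed
  have "sq_dev N (spawn_pmf N A k s) \<mu>
      = (\<Sum>l\<in>S. sq_dev N (rounded_unit_pmf (c * \<bar>A l k\<bar>) l (rsgn (A l k * of_int s))) \<mu>) / c"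
    unfolding sq_dev_def S_def c_def by (rule expectation_spawn_pmf[OF S])
  also have "\<dots> \<le> (\<Sum>l\<in>S. (c * c - 2 * c) * (A l k)\<^sup>2 + (1/4 + W)) / c"
    using c branch by (intro divide_right_mono sum_mono) auto
  also have "\<dots> = ((c * c - 2 * c) * W + c * (1/4 + W)) / c"
    by (simp add: sum.distrib sum_distrib_left W_def c_def)
  also have "\<dots> = (c - 1) * W + 1/4"
    using c by (simp add: field_simps)
  finally show ?thesis by (simp add: \<mu>_def c_def W_def S_def)
qed

lemma diag_pmf_eq: "diag_pmf A k s = rounded_unit_pmf \<bar>A k k\<bar> k (rsgn (A k k * of_int s))"
  unfolding diag_pmf_def rounded_unit_pmf_def ..

lemma mean_vec_diag_pmf:
  "s \<in> {1, -1} \<Longrightarrow> mean_vec (diag_pmf A k s) i = (if i = k then of_int s * A k k else 0)"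
  by (simp add: diag_pmf_eq mean_vec_rounded_unit_pmf of_int_rsgn_mult_sign sgn_mult_abs)

lemma sq_dev_diag_pmf_le:
  assumes "k < N" "A k k \<noteq> 0" "s \<in> {1, -1}"
  shows "sq_dev N (diag_pmf A k s) (mean_vec (diag_pmf A k s)) \<le> 1/4"
  unfolding diag_pmf_eq
  using assms by (intro sq_dev_rounded_unit_pmf_mean_le) (auto simp: of_int_rsgn_mult_sign sgn_if)

lemma particle_pmf_eq_indep_sum:
  "particle_pmf N A (k, s) = indep_sum_pmf (spawn_pmf N A k s) (diag_pmf A k s)"
  unfolding particle_pmf_def indep_sum_pmf_def by simp

lemma finite_set_particle_pmf:
  "offsupp N A k \<noteq> {} \<Longrightarrow> finite (set_pmf (particle_pmf N A (k, s)))"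
  by (simp add: particle_pmf_eq_indep_sum finite_set_indep_sum_pmf finite_set_spawn_pmf diag_pmf_eq)

lemma mean_vec_particle_pmf:
  assumes "k < N" "offsupp N A k \<noteq> {}" "s \<in> {1, -1}" "i < N"
  shows "mean_vec (particle_pmf N A (k, s)) i = of_int s * A i k"
proof -
  have "finite (set_pmf (spawn_pmf N A k s))" "finite (set_pmf (diag_pmf A k s))"
    using assms(2) by (simp_all add: finite_set_spawn_pmf diag_pmf_eq)
  then show ?thesis
    using assms by (auto simp: particle_pmf_eq_indep_sum mean_vec_indep_sum_pmf
        mean_vec_spawn_pmf mean_vec_diag_pmf offsupp_def)
qed

lemma sq_dev_particle_pmf_le:
  assumes kN: "k < N" and Akk: "A k k \<noteq> 0" and col: "card {i. i < N \<and> A i k \<noteq> 0} \<ge> 2"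
    and s: "s \<in> {1, -1}"
  shows "sq_dev N (particle_pmf N A (k, s)) (mean_vec (particle_pmf N A (k, s)))
      \<le> (real (col_norm0 N A k) - 2) * offcol_norm2_sq N A k + 1/2"
proof -
  have S: "offsupp N A k \<noteq> {}" using col by (rule offsupp_nonempty)
  have fin: "finite (set_pmf (spawn_pmf N A k s))" "finite (set_pmf (diag_pmf A k s))"
    using S by (simp_all add: finite_set_spawn_pmf diag_pmf_eq)
  have "sq_dev N (particle_pmf N A (k, s)) (mean_vec (particle_pmf N A (k, s)))
      = sq_dev N (indep_sum_pmf (spawn_pmf N A k s) (diag_pmf A k s))
          (\<lambda>i. mean_vec (spawn_pmf N A k s) i + mean_vec (diag_pmf A k s) i)"
    by (simp add: particle_pmf_eq_indep_sum mean_vec_indep_sum_pmf fin)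
  also have "\<dots> = sq_dev N (spawn_pmf N A k s) (mean_vec (spawn_pmf N A k s))
      + sq_dev N (diag_pmf A k s) (mean_vec (diag_pmf A k s))"
    by (rule sq_dev_indep_sum_pmf[OF fin])
  also have "\<dots> \<le> ((real (card (offsupp N A k)) - 1) * (\<Sum>l\<in>offsupp N A k. (A l k)\<^sup>2) + 1/4) + 1/4"
    by (intro add_mono sq_dev_spawn_pmf_le sq_dev_diag_pmf_le S s kN Akk)
  also have "\<dots> = (real (col_norm0 N A k) - 2) * offcol_norm2_sq N A k + 1/2"
    by (simp add: col_norm0_eq_card_offsupp[of k N A, OF kN Akk] offcol_norm2_sq_eq)
  finally show ?thesis .
qed

lemma sum_particles_Cons [simp]:
  "sum_particles N A (p # ps) = indep_sum_pmf (particle_pmf N A p) (sum_particles N A ps)"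
  by (simp add: indep_sum_pmf_def)

declare sum_particles.simps(2) [simp del]

lemma finite_set_sum_particles:
  "(\<And>p. p \<in> set ps \<Longrightarrow> finite (set_pmf (particle_pmf N A p))) \<Longrightarrow>
     finite (set_pmf (sum_particles N A ps))"
  by (induction ps) (simp_all add: finite_set_indep_sum_pmf)

lemma mean_vec_sum_particles:
  "(\<And>p. p \<in> set ps \<Longrightarrow> finite (set_pmf (particle_pmf N A p))) \<Longrightarrow>
     mean_vec (sum_particles N A ps) = (\<lambda>i. \<Sum>p\<leftarrow>ps. mean_vec (particle_pmf N A p) i)"
  by (induction ps) (simp_all add: mean_vec_indep_sum_pmf finite_set_sum_particles)

lemma sq_dev_sum_particles:
  "(\<And>p. p \<in> set ps \<Longrightarrow> finite (set_pmf (particle_pmf N A p))) \<Longrightarrow>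
     sq_dev N (sum_particles N A ps) (mean_vec (sum_particles N A ps))
       = (\<Sum>p\<leftarrow>ps. sq_dev N (particle_pmf N A p) (mean_vec (particle_pmf N A p)))"
  by (induction ps) (simp_all add: sq_dev_def[of _ "return_pmf _"] mean_vec_indep_sum_pmf
      sq_dev_indep_sum_pmf finite_set_sum_particles)

lemma sum_list_particles:
  "(\<Sum>p\<leftarrow>particles N v. f p) = (\<Sum>k<N. real (nat \<bar>v k\<bar>) * f (k, sgn (v k)))"
  by (induction N) (simp_all add: particles_def sum_list_replicate)

lemma set_particles: "(k, s) \<in> set (particles N v) \<Longrightarrow> k < N \<and> s \<in> {1, -1}"
  by (auto simp: particles_def sgn_if split: if_splits)

lemma mat_vec_eq_sum_list_particles:
  "mat_vec N A v i = (\<Sum>p\<leftarrow>particles N v. of_int (snd p) * A i (fst p))"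
  unfolding sum_list_particles mat_vec_def
  by (rule sum.cong) (auto simp: sgn_if)

lemma expectation_fciqmc_sq_error_le:
  assumes diag: "\<forall>k<N. A k k \<noteq> 0" and col: "\<forall>k<N. card {i. i < N \<and> A i k \<noteq> 0} \<ge> 2"
  shows "E (fciqmc_step N A v) (\<lambda>w. \<Sum>i<N. (real_of_int (w i) - mat_vec N A v i)\<^sup>2)
    \<le> vec_norm1 N v * (Max ((\<lambda>k. (real (col_norm0 N A k) - 2) * offcol_norm2_sq N A k) ` {..<N}) + 1/2)"
    (is "_ \<le> _ * (?X + 1/2)")
proof -
  define ps where "ps = particles N v"
  have particle: "k < N" "s \<in> {1, -1}" "offsupp N A k \<noteq> {}" if "(k, s) \<in> set ps" for k s
    using that set_particles[of k s N v] col offsupp_nonempty[of N A k] by (auto simp: ps_def)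
  have fin: "finite (set_pmf (particle_pmf N A p))" if "p \<in> set ps" for p
    using that particle finite_set_particle_pmf by (metis prod.collapse)
  have mean: "mean_vec (sum_particles N A ps) i = mat_vec N A v i" if i: "i < N" for i
  proof -
    have "mean_vec (sum_particles N A ps) i = (\<Sum>p\<leftarrow>ps. mean_vec (particle_pmf N A p) i)"
      by (simp add: mean_vec_sum_particles fin)
    also have "\<dots> = (\<Sum>p\<leftarrow>ps. of_int (snd p) * A i (fst p))"
      using particle i by (intro arg_cong[of _ _ sum_list] map_cong) (auto simp: mean_vec_particle_pmf)
    finally show ?thesis by (simp add: mat_vec_eq_sum_list_particles ps_def)
  qed
  have "E (fciqmc_step N A v) (\<lambda>w. \<Sum>i<N. (real_of_int (w i) - mat_vec N A v i)\<^sup>2)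
      = sq_dev N (sum_particles N A ps) (mat_vec N A v)"
    by (simp add: sq_dev_def fciqmc_step_def ps_def)
  also have "\<dots> = sq_dev N (sum_particles N A ps) (mean_vec (sum_particles N A ps))"
    by (rule sq_dev_cong) (rule mean[symmetric])
  also have "\<dots> = (\<Sum>p\<leftarrow>ps. sq_dev N (particle_pmf N A p) (mean_vec (particle_pmf N A p)))"
    by (rule sq_dev_sum_particles[OF fin])
  also have "\<dots> \<le> (\<Sum>p\<leftarrow>ps. ?X + 1/2)"
  proof (rule sum_list_mono)
    fix p assume p: "p \<in> set ps"
    obtain k s where ks: "p = (k, s)" by fastforce
    with p particle have k: "k < N" and s: "s \<in> {1, -1}" by auto
    have "sq_dev N (particle_pmf N A p) (mean_vec (particle_pmf N A p))
        \<le> (real (col_norm0 N A k) - 2) * offcol_norm2_sq N A k + 1/2"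
      unfolding ks using k s diag col by (intro sq_dev_particle_pmf_le) auto
    moreover have "(real (col_norm0 N A k) - 2) * offcol_norm2_sq N A k \<le> ?X"
      using k by (intro Max_ge) auto
    ultimately show "sq_dev N (particle_pmf N A p) (mean_vec (particle_pmf N A p)) \<le> ?X + 1/2"
      by linarith
  qed
  also have "\<dots> = vec_norm1 N v * (?X + 1/2)"
    by (simp add: ps_def sum_list_particles vec_norm1_def sum_distrib_right)
  finally show ?thesis .
qed

lemma abs_le_mat_norm1: "i < N \<Longrightarrow> k < N \<Longrightarrow> \<bar>A i k\<bar> \<le> mat_norm1 N A"
  unfolding mat_norm1_def
  by (rule order_trans[OF member_le_sum[of i "{..<N}"]]) (auto intro: Max_ge)

lemma C_e_mult_mat_norm1_sq:
  assumes "k < N" "A k k \<noteq> 0"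
  shows "C_e N A * (mat_norm1 N A)\<^sup>2
     = Max ((\<lambda>k. (real (col_norm0 N A k) - 2) * offcol_norm2_sq N A k) ` {..<N}) + 1/2"
proof -
  have "0 < \<bar>A k k\<bar>" using assms(2) by simp
  also have "\<dots> \<le> mat_norm1 N A" using assms(1) by (intro abs_le_mat_norm1)
  finally show ?thesis by (simp add: C_e_def)
qed

theorem mainTheorem5:
  fixes N :: nat and A :: "nat \<Rightarrow> nat \<Rightarrow> real" and v :: "nat \<Rightarrow> int" and m :: real
  assumes "N \<ge> 1"
    and "\<forall>i<N. \<forall>j<N. A i j = A j i"
    and "\<forall>k<N. A k k \<noteq> 0"
    and "\<forall>k<N. card {i. i < N \<and> A i k \<noteq> 0} \<ge> 2"
    and "m > 0"
    and "vec_norm1 N v \<ge> m"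
  shows "measure_pmf.expectation (fciqmc_step N A v)
           (\<lambda>w. \<Sum>i<N. (real_of_int (w i) - mat_vec N A v i)\<^sup>2)
         \<le> C_e N A * (mat_norm1 N A)\<^sup>2 * (vec_norm1 N v)\<^sup>2 / m"
proof -
  let ?X = "Max ((\<lambda>k. (real (col_norm0 N A k) - 2) * offcol_norm2_sq N A k) ` {..<N})"
  let ?M = "vec_norm1 N v"
  have N0: "0 < N" using assms(1) by simp
  have "2 \<le> col_norm0 N A 0" using assms(4) N0 by (simp add: col_norm0_def)
  then have "0 \<le> (real (col_norm0 N A 0) - 2) * offcol_norm2_sq N A 0"
    by (intro mult_nonneg_nonneg) (auto simp: offcol_norm2_sq_def intro: sum_nonneg)
  also have "\<dots> \<le> ?X" using N0 by (intro Max_ge) auto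
  finally have X_nonneg: "0 \<le> ?X" .
  have "measure_pmf.expectation (fciqmc_step N A v)
           (\<lambda>w. \<Sum>i<N. (real_of_int (w i) - mat_vec N A v i)\<^sup>2) \<le> ?M * (?X + 1/2)"
    by (rule expectation_fciqmc_sq_error_le[OF assms(3,4)])
  also have "\<dots> \<le> ?M\<^sup>2 / m * (?X + 1/2)"
    using assms(5,6) X_nonneg
    by (intro mult_right_mono) (simp_all add: power2_eq_square field_simps mult_right_mono)
  finally show ?thesis
    using C_e_mult_mat_norm1_sq[of 0 N A] N0 assms(3) by (simp add: mult_ac)
qed

end
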